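(* Let $t,k\ge2$ be integers with $(t+1)\mid(k+1)$. Then $N(tk+i,k)=N(tk-i,k)=t-i$ for every integer $0\le i\le t$.
   Context: For $n>k\ge1$, $N(n,k)$ is the nullity of the $n\times n$ skew-symmetric Toeplitz matrix $A(n,k)$ whose first $k$ superdiagonals have all entries $1$ and whose remaining superdiagonals have all entries $0$. This nullity depends only on $n\bmod (k^2+k)$, and $N(n,k)$ is defined for every integer $n$ as $N(n',k)$ for any $n'>k$ with $n'\equiv n\pmod{k^2+k}$. *)

theory Defs
  imports "Jordan_Normal_Form.Matrix_Kernel"
begin

definition A_mat :: "nat \<Rightarrow> nat \<Rightarrow> real mat" where
  "A_mat n k = mat n n (\<lambda>(i, j).
      if i < j \<and> j - i \<le> k then 1
      else if j < i \<and> i - j \<le> k then -1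
      else 0)"

definition nullity_A :: "nat \<Rightarrow> nat \<Rightarrow> nat" where
  "nullity_A n k = kernel_dim (A_mat n k)"

text \<open>N(n,k) for every integer n: for n > k it is the nullity of A(n,k); otherwise it is the
  nullity of A(n',k) for the representative n' = (n mod (k^2+k)) + (k^2+k) > k, which is
  congruent to n modulo k^2+k (per the context, the choice of n' does not matter).\<close>
definition N :: "int \<Rightarrow> nat \<Rightarrow> nat" where
  "N n k = (if n > int k then nullity_A (nat n) k
            else nullity_A (nat (n mod int (k^2 + k) + int (k^2 + k))) k)"

end

theory Submission
  imports Defs
begin

text \<open>
  Let p(a) = v_0 + ... + v_(a-1) be the prefix sums of v. Row r of A(n,k) v = 0 says that the
  zero-padded vector has equal sums over the two windows of length k on either side of r.
  Solving this recursion from the left, v lies in the kernel iff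
  v_j = p(j mod k + 1) - p(j mod (k+1)) for j < n and the same expression vanishes for
  n \<le> j < n + k. So the kernel is parametrised by p(1), ..., p(k) subject to k linear
  boundary conditions, one for each position of the window [n, n+k).

  Let n = tk \<plusminus> i with (t+1) | (k+1). The positions j of the window with j div k = t force p
  to be (t+1)-periodic on [0,k]; for a (t+1)-periodic p they impose nothing else, because
  j mod k + 1 \<equiv> j + j div k + 1 and j mod (k+1) \<equiv> j modulo t+1. The remaining i positions
  of the window lie in the neighbouring block and make p vanish on i of the t nonzero
  residues, leaving t - i free parameters. The only case with tk - i \<le> k is t = k = i = 2,
  where N(2,2) is the nullity of A(8,2), which is 0.
\<close>

section \<open>Kernel vectors as profiles of their prefix sums\<close>

lemma sum_mod_period:
  fixes g :: "nat \<Rightarrow> 'a::ab_group_add"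
  shows "(\<Sum>j\<in>{a..<a+m}. g (j mod m)) = (\<Sum>j<m. g j)"
proof (induction a)
  case 0
  then show ?case by (simp add: lessThan_atLeast0)
next
  case (Suc a)
  have "(\<Sum>j\<in>{Suc a..<Suc a+m}. g (j mod m))
      = (\<Sum>j\<in>{a..<a+m}. g (j mod m)) - g (a mod m) + g ((a+m) mod m)"
    by (cases "m = 0") (simp_all add: sum.atLeast_Suc_lessThan sum.atLeastLessThan_Suc)
  with Suc show ?case by simp
qed

definition profile :: "nat \<Rightarrow> (nat \<Rightarrow> real) \<Rightarrow> nat \<Rightarrow> real" where
  "profile k p j = p (j mod k + 1) - p (j mod (k + 1))"

definition boundary_cond :: "nat \<Rightarrow> nat \<Rightarrow> (nat \<Rightarrow> real) \<Rightarrow> bool" where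
  "boundary_cond n k p \<longleftrightarrow> (\<forall>j\<in>{n..<n+k}. profile k p j = 0)"

definition prefix_sums :: "real vec \<Rightarrow> nat \<Rightarrow> real" where
  "prefix_sums v a = (\<Sum>j<a. v $ j)"

definition shifted_profile :: "nat \<Rightarrow> (nat \<Rightarrow> real) \<Rightarrow> nat \<Rightarrow> real" where
  "shifted_profile k p j = p (j mod k + 1) - p (Suc j mod (k + 1))"

definition zero_padded :: "nat \<Rightarrow> nat \<Rightarrow> real vec \<Rightarrow> nat \<Rightarrow> real" where
  "zero_padded n k v j = (if k \<le> j \<and> j < n + k then v $ (j - k) else 0)"

lemma prefix_sums_0 [simp]: "prefix_sums v 0 = 0"
  by (simp add: prefix_sums_def)

lemma prefix_sums_Suc: "prefix_sums v (Suc d) = prefix_sums v d + v $ d"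
  by (simp add: prefix_sums_def)

lemma profile_below: "j < k \<Longrightarrow> profile k p j = p (Suc j) - p j"
  by (simp add: profile_def)

lemma profile_cong:
  assumes "0 < k" "\<And>a. a \<le> k \<Longrightarrow> p a = q a"
  shows "profile k p j = profile k q j"
proof -
  have "j mod k + 1 \<le> k" "j mod (k + 1) \<le> k"
    using assms(1) by (simp_all add: Suc_leI less_Suc_eq_le)
  with assms(2) show ?thesis
    by (simp add: profile_def)
qed

lemma shifted_profile_below: "j < k \<Longrightarrow> shifted_profile k p j = 0"
  by (simp add: shifted_profile_def)

lemma shifted_profile_eq_profile:
  assumes "k \<le> j"
  shows "shifted_profile k p j = profile k p (j - k)"
proof -
  have "j mod k = (j - k) mod k"
    using assms by (simp add: le_mod_geq)
  moreover have "Suc j mod (k + 1) = (j - k) mod (k + 1)"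
    using assms by (metis Suc_eq_plus1 add.commute le_add_diff_inverse mod_add_self2 add.assoc)
  ultimately show ?thesis
    by (simp add: shifted_profile_def profile_def)
qed

lemma sum_shifted_profile_window:
  assumes "0 < k"
  shows "(\<Sum>j\<in>{a..<a+k}. shifted_profile k p j)
       = (\<Sum>j<k. p (Suc j)) - (\<Sum>j<k+1. p j) + p (a mod (k + 1))"
proof -
  have first: "(\<Sum>j\<in>{a..<a+k}. p (j mod k + 1)) = (\<Sum>j<k. p (Suc j))"
    using sum_mod_period[where g="\<lambda>j. p (Suc j)" and a=a and m=k] by simp
  have "(\<Sum>j\<in>{a..<a+k}. p (Suc j mod (k + 1))) = (\<Sum>j\<in>{Suc a..<Suc a+k}. p (j mod (k + 1)))"
    using sum.shift_bounds_Suc_ivl[of "\<lambda>j. p (j mod (k + 1))" a "a + k"] by simp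
  also have "\<dots> = (\<Sum>j\<in>{Suc a..<Suc a+(k+1)}. p (j mod (k + 1))) - p ((Suc a + k) mod (k + 1))"
    by simp
  also have "(Suc a + k) mod (k + 1) = a mod (k + 1)"
    by (metis add.commute add_Suc_right mod_add_self2 plus_1_eq_Suc)
  finally have second: "(\<Sum>j\<in>{a..<a+k}. p (Suc j mod (k + 1))) = (\<Sum>j<k+1. p j) - p (a mod (k + 1))"
    by (simp only: sum_mod_period)
  show ?thesis
    unfolding shifted_profile_def sum_subtractf first second by simp
qed

lemma sum_shifted_profile_window_shift:
  assumes "0 < k"
  shows "(\<Sum>j\<in>{a+k+1..<a+k+1+k}. shifted_profile k p j) = (\<Sum>j\<in>{a..<a+k}. shifted_profile k p j)"
proof -
  have "(a + k + 1) mod (k + 1) = a mod (k + 1)"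
    by (metis add.assoc mod_add_self2)
  then show ?thesis
    using sum_shifted_profile_window[OF assms, where a="a+k+1" and p=p]
      sum_shifted_profile_window[OF assms, where a=a and p=p]
    by simp
qed

lemma sum_zero_padded:
  assumes "finite W"
  shows "(\<Sum>j\<in>W. zero_padded n k v j) = (\<Sum>j<n. (if j + k \<in> W then v $ j else 0))"
proof -
  have "(\<Sum>j\<in>W. zero_padded n k v j) = (\<Sum>j\<in>W. if j \<in> {k..<n+k} then v $ (j - k) else 0)"
    by (rule sum.cong) (auto simp: zero_padded_def)
  also have "\<dots> = (\<Sum>j\<in>{k..<n+k} \<inter> W. v $ (j - k))"
    by (simp only: sum.inter_restrict[OF assms, symmetric] Int_commute)
  also have "\<dots> = (\<Sum>j\<in>{k..<n+k}. if j \<in> W then v $ (j - k) else 0)"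
    by (simp only: sum.inter_restrict[OF finite_atLeastLessThan])
  also have "\<dots> = (\<Sum>j\<in>{0..<n}. if j + k \<in> W then v $ j else 0)"
    using sum.shift_bounds_nat_ivl[of "\<lambda>j. if j \<in> W then v $ (j - k) else 0" 0 k n]
    by (simp cong: if_cong)
  finally show ?thesis
    by (simp add: atLeast0LessThan)
qed

lemma A_mat_carrier [simp]: "A_mat n k \<in> carrier_mat n n"
  by (simp add: A_mat_def)

lemma A_mat_mult_vec_nth:
  assumes r: "r < n" and v: "v \<in> carrier_vec n"
  shows "(A_mat n k *\<^sub>v v) $ r = (\<Sum>j\<in>{r+k+1..<r+k+1+k}. zero_padded n k v j)
                                 - (\<Sum>j\<in>{r..<r+k}. zero_padded n k v j)"
proof -
  have "(A_mat n k *\<^sub>v v) $ r = (\<Sum>j<n. A_mat n k $$ (r, j) * v $ j)"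
    using r v by (simp add: A_mat_def scalar_prod_def lessThan_atLeast0)
  also have "\<dots> = (\<Sum>j<n. (if j + k \<in> {r+k+1..<r+k+1+k} then v $ j else 0)
                        - (if j + k \<in> {r..<r+k} then v $ j else 0))"
    by (rule sum.cong) (auto simp: A_mat_def r)
  also have "\<dots> = (\<Sum>j\<in>{r+k+1..<r+k+1+k}. zero_padded n k v j) - (\<Sum>j\<in>{r..<r+k}. zero_padded n k v j)"
    by (simp only: sum_subtractf sum_zero_padded[OF finite_atLeastLessThan])
  finally show ?thesis .
qed

lemma profile_in_kernel:
  assumes k: "0 < k" and bc: "boundary_cond n k p"
  shows "vec n (profile k p) \<in> mat_kernel (A_mat n k)"
proof (rule mat_kernelI[OF A_mat_carrier])
  let ?v = "vec n (profile k p)"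
  have padded: "zero_padded n k ?v j = shifted_profile k p j" if "j < n + 2 * k" for j
  proof (cases "k \<le> j")
    case True
    moreover have "profile k p (j - k) = 0" if "n + k \<le> j"
    proof -
      have "j - k \<in> {n..<n+k}"
        using \<open>j < n + 2 * k\<close> that by auto
      with bc show ?thesis
        by (simp add: boundary_cond_def)
    qed
    ultimately show ?thesis
      by (auto simp: zero_padded_def shifted_profile_eq_profile)
  qed (simp add: zero_padded_def shifted_profile_below)
  show "A_mat n k *\<^sub>v ?v = 0\<^sub>v n"
  proof (rule eq_vecI)
    fix r
    assume "r < dim_vec (0\<^sub>v n :: real vec)"
    then have r: "r < n" by simp
    have "(A_mat n k *\<^sub>v ?v) $ r = (\<Sum>j\<in>{r+k+1..<r+k+1+k}. shifted_profile k p j)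
                                 - (\<Sum>j\<in>{r..<r+k}. shifted_profile k p j)"
      using r by (simp add: A_mat_mult_vec_nth padded)
    also have "\<dots> = 0"
      by (simp only: sum_shifted_profile_window_shift[OF k] diff_self)
    finally show "(A_mat n k *\<^sub>v ?v) $ r = 0\<^sub>v n $ r"
      using r by simp
  qed (simp add: A_mat_def)
qed simp

lemma sum_window_split_last:
  fixes f :: "nat \<Rightarrow> 'a::comm_monoid_add"
  assumes "0 < k"
  shows "(\<Sum>j\<in>{r+k+1..<r+k+1+k}. f j) = (\<Sum>j\<in>{r+k+1..<r+k+k}. f j) + f (r + k + k)"
  using assms by (simp add: sum.atLeastLessThan_Suc[of "r+k+1" "r+k+k", symmetric])

lemma shifted_profile_recursion:
  assumes "0 < k"
  shows "shifted_profile k p (r + k + k) = (\<Sum>j\<in>{r..<r+k}. shifted_profile k p j)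
                                        - (\<Sum>j\<in>{r+k+1..<r+k+k}. shifted_profile k p j)"
  using sum_shifted_profile_window_shift[OF assms, where a=r and p=p]
    sum_window_split_last[OF assms, where r=r and f="shifted_profile k p"]
  by linarith

lemma zero_padded_kernel_recursion:
  assumes k: "0 < k" and v: "v \<in> mat_kernel (A_mat n k)" and r: "r < n"
  shows "zero_padded n k v (r + k + k) = (\<Sum>j\<in>{r..<r+k}. zero_padded n k v j)
                                       - (\<Sum>j\<in>{r+k+1..<r+k+k}. zero_padded n k v j)"
proof -
  have vc: "v \<in> carrier_vec n" and "(A_mat n k *\<^sub>v v) $ r = 0"
    using mat_kernelD[OF A_mat_carrier v] r by auto
  then have "(\<Sum>j\<in>{r+k+1..<r+k+1+k}. zero_padded n k v j) = (\<Sum>j\<in>{r..<r+k}. zero_padded n k v j)"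
    using A_mat_mult_vec_nth[OF r vc, of k] by simp
  with sum_window_split_last[OF k, where r=r and f="zero_padded n k v"] show ?thesis
    by linarith
qed

lemma zero_padded_kernel_eq_shifted_profile:
  assumes k: "0 < k" and kn: "k < n" and v: "v \<in> mat_kernel (A_mat n k)"
    and "j < n + 2 * k"
  shows "zero_padded n k v j = shifted_profile k (prefix_sums v) j"
  using \<open>j < n + 2 * k\<close>
proof (induction j rule: less_induct)
  case (less j)
  let ?p = "prefix_sums v"
  consider "j < k" | "k \<le> j" "j < 2 * k" | "2 * k \<le> j"
    by linarith
  then show ?case
  proof cases
    case 1
    then show ?thesis
      by (simp add: zero_padded_def shifted_profile_below)
  next
    case 2
    then have "shifted_profile k ?p j = ?p (Suc (j - k)) - ?p (j - k)"
      by (simp add: shifted_profile_eq_profile profile_below)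
    also have "\<dots> = v $ (j - k)"
      by (simp add: prefix_sums_def)
    finally show ?thesis
      using 2 kn by (simp add: zero_padded_def)
  next
    case 3
    define r where "r = j - 2 * k"
    have r: "r < n" and j: "j = r + k + k"
      using 3 less.prems by (auto simp: r_def)
    have earlier: "(\<Sum>j\<in>{a..<b}. zero_padded n k v j) = (\<Sum>j\<in>{a..<b}. shifted_profile k ?p j)"
      if "b \<le> r + k + k" for a b
      using that j less by (intro sum.cong) auto
    have "zero_padded n k v j = (\<Sum>j\<in>{r..<r+k}. zero_padded n k v j)
                               - (\<Sum>j\<in>{r+k+1..<r+k+k}. zero_padded n k v j)"
      unfolding j by (rule zero_padded_kernel_recursion[OF k v r])
    also have "\<dots> = (\<Sum>j\<in>{r..<r+k}. shifted_profile k ?p j)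
                   - (\<Sum>j\<in>{r+k+1..<r+k+k}. shifted_profile k ?p j)"
      using k by (simp add: earlier)
    also have "\<dots> = shifted_profile k ?p j"
      unfolding j by (rule shifted_profile_recursion[OF k, symmetric])
    finally show ?thesis .
  qed
qed

lemma kernel_vec_eq_profile:
  assumes "0 < k" "k < n" "v \<in> mat_kernel (A_mat n k)" "j < n"
  shows "v $ j = profile k (prefix_sums v) j"
  using zero_padded_kernel_eq_shifted_profile[OF assms(1-3), of "j + k"] assms(4)
  by (simp add: zero_padded_def shifted_profile_eq_profile)

lemma boundary_cond_prefix_sums:
  assumes "0 < k" "k < n" "v \<in> mat_kernel (A_mat n k)"
  shows "boundary_cond n k (prefix_sums v)"
  unfolding boundary_cond_def
proof
  fix j
  assume "j \<in> {n..<n+k}"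
  then show "profile k (prefix_sums v) j = 0"
    using zero_padded_kernel_eq_shifted_profile[OF assms, of "j + k"]
    by (simp add: zero_padded_def shifted_profile_eq_profile)
qed

section \<open>The dimension of the kernel\<close>

lemma kernel_dim_eq_card_of_unit_coordinates:
  fixes M :: "'a::field mat"
  assumes M: "M \<in> carrier_mat nr nc" and I: "finite I"
    and idx: "\<And>c. c \<in> I \<Longrightarrow> idx c < nc"
    and w: "\<And>c. c \<in> I \<Longrightarrow> w c \<in> mat_kernel M"
    and unit: "\<And>c c'. c \<in> I \<Longrightarrow> c' \<in> I \<Longrightarrow> w c $ idx c' = (if c = c' then 1 else 0)"
    and determined: "\<And>u v. u \<in> mat_kernel M \<Longrightarrow> v \<in> mat_kernel M \<Longrightarrow>
      (\<forall>c\<in>I. u $ idx c = v $ idx c) \<Longrightarrow> u = v"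
  shows "kernel_dim M = card I"
proof -
  interpret K: kernel nr nc M by (unfold_locales) (rule M)
  define W where "W = w ` I"
  have W: "W \<subseteq> mat_kernel M"
    using w by (auto simp: W_def)
  have finW: "finite W"
    using I by (simp add: W_def)
  have inj: "inj_on w I"
    by (rule inj_onI) (metis unit zero_neq_one)
  have lincomb_coord: "K.lincomb a W $ idx c = a (w c)" if "c \<in> I" for a c
  proof -
    have "K.lincomb a W $ idx c = (\<Sum>x\<in>W. a x * x $ idx c)"
      by (rule K.lincomb_index[OF idx[OF that] W])
    also have "\<dots> = (\<Sum>c'\<in>I. a (w c') * w c' $ idx c)"
      by (simp add: W_def sum.reindex[OF inj])
    also have "\<dots> = (\<Sum>c'\<in>I. if c' = c then a (w c) else 0)"
      using that unit by (intro sum.cong) auto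
    finally show ?thesis
      using that I by simp
  qed
  have indpt: "K.lin_indpt W"
  proof (rule K.Ker.finite_lin_indpt2[OF finW W])
    fix a
    assume "K.lincomb a W = 0\<^sub>v nc"
    then show "\<forall>x\<in>W. a x = 0"
      using lincomb_coord idx by (auto simp: W_def) (metis index_zero_vec(1))
  qed
  have span: "K.span W = mat_kernel M"
  proof
    show "K.span W \<subseteq> mat_kernel M"
      using K.Ker.span_is_subset2[OF W] by simp
    show "mat_kernel M \<subseteq> K.span W"
    proof
      fix v
      assume v: "v \<in> mat_kernel M"
      define L where "L = K.lincomb (\<lambda>x. v $ idx (inv_into I w x)) W"
      have L: "L \<in> mat_kernel M"
        unfolding L_def using W by auto
      have "\<forall>c\<in>I. v $ idx c = L $ idx c"
        using idx inj by (simp add: L_def lincomb_coord)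
      with v L have "v = L"
        by (rule determined)
      then show "v \<in> K.span W"
        unfolding L_def K.Ker.span_def using finW by blast
    qed
  qed
  have "kernel_dim M = card W"
    using K.Ker.dim_basis[OF finW] indpt span W by (simp add: K.Ker.basis_def)
  then show ?thesis
    by (simp add: W_def card_image[OF inj])
qed

lemma kernel_vec_eqI_periodic_profiles:
  assumes k: "0 < k" and kn: "k < n" and e: "e < T"
    and char: "\<And>p. p 0 = 0 \<Longrightarrow> boundary_cond n k p \<longleftrightarrow>
      (\<forall>a\<le>k. p a = p (a mod T)) \<and> (\<forall>d<T. d \<notin> {f..e} \<longrightarrow> p d = 0)"
    and u: "u \<in> mat_kernel (A_mat n k)" and v: "v \<in> mat_kernel (A_mat n k)"
    and agree: "\<forall>c\<in>{f..e}. u $ (c - 1) = v $ (c - 1)"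
  shows "u = v"
proof -
  let ?p = "prefix_sums u" and ?q = "prefix_sums v"
  have p: "(\<forall>a\<le>k. ?p a = ?p (a mod T)) \<and> (\<forall>d<T. d \<notin> {f..e} \<longrightarrow> ?p d = 0)"
    using char[of ?p] boundary_cond_prefix_sums[OF k kn u] by simp
  have q: "(\<forall>a\<le>k. ?q a = ?q (a mod T)) \<and> (\<forall>d<T. d \<notin> {f..e} \<longrightarrow> ?q d = 0)"
    using char[of ?q] boundary_cond_prefix_sums[OF k kn v] by simp
  have "d < T \<longrightarrow> ?p d = ?q d" for d
  proof (induction d)
    case (Suc d)
    show ?case
    proof (cases "Suc d \<in> {f..e}")
      case True
      with Suc agree[rule_format, of "Suc d"] show ?thesis
        by (auto simp: prefix_sums_Suc)
    qed (use p q in auto)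
  qed simp
  then have pq: "?p a = ?q a" if "a \<le> k" for a
    using p q that e by (metis mod_less_divisor gr_implies_not0 neq0_conv)
  show ?thesis
  proof (rule eq_vecI)
    show "dim_vec u = dim_vec v"
      using mat_kernelD[OF A_mat_carrier u] mat_kernelD[OF A_mat_carrier v] by simp
    fix j
    assume "j < dim_vec v"
    then have "j < n"
      using mat_kernelD[OF A_mat_carrier v] by simp
    then show "u $ j = v $ j"
      using kernel_vec_eq_profile[OF k kn u] kernel_vec_eq_profile[OF k kn v] profile_cong[OF k pq]
      by simp
  qed
qed

lemma kernel_dim_A_mat_eq_periodic_profiles:
  assumes k: "0 < k" and kn: "k < n" and f: "1 \<le> f" and e: "e < T" and T: "T \<le> k + 1"
    and char: "\<And>p. p 0 = 0 \<Longrightarrow> boundary_cond n k p \<longleftrightarrow>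
      (\<forall>a\<le>k. p a = p (a mod T)) \<and> (\<forall>d<T. d \<notin> {f..e} \<longrightarrow> p d = 0)"
  shows "kernel_dim (A_mat n k) = e + 1 - f"
proof -
  define step where "step c a = (if c \<le> a mod T \<and> a mod T \<le> e then 1 else 0 :: real)" for c a
  define w where "w c = vec n (profile k (step c))" for c
  have w: "w c \<in> mat_kernel (A_mat n k)" if "c \<in> {f..e}" for c
  proof -
    have "boundary_cond n k (step c)"
      using that f e by (subst char) (auto simp: step_def)
    then show ?thesis
      unfolding w_def by (rule profile_in_kernel[OF k])
  qed
  have unit: "w c $ (c' - 1) = (if c = c' then 1 else 0)" if "c \<in> {f..e}" "c' \<in> {f..e}" for c c'
  proof -
    have "c' - 1 < k" "c' < T" "c' - 1 < n"
      using that f e T kn by auto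
    then show ?thesis
      using that f by (auto simp: w_def step_def profile_below)
  qed
  have "kernel_dim (A_mat n k) = card {f..e}"
  proof (rule kernel_dim_eq_card_of_unit_coordinates[OF A_mat_carrier, where idx="\<lambda>c. c - 1" and w=w])
    show "\<And>c. c \<in> {f..e} \<Longrightarrow> c - 1 < n"
      using e T kn by auto
  qed (use w unit kernel_vec_eqI_periodic_profiles[OF k kn e char] in auto)
  then show ?thesis
    by simp
qed

section \<open>Periodic profiles\<close>

lemma boundary_cond_at:
  "boundary_cond n k p \<Longrightarrow> n \<le> j \<Longrightarrow> j < n + k \<Longrightarrow> p (Suc (j mod k)) = p (j mod (k + 1))"
  by (simp add: boundary_cond_def profile_def)

lemma boundary_cond_cong:
  assumes "0 < k" "\<And>a. a \<le> k \<Longrightarrow> p a = q a"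
  shows "boundary_cond n k p \<longleftrightarrow> boundary_cond n k q"
  using profile_cong[OF assms] by (simp add: boundary_cond_def)

lemma periodic_of_descent:
  fixes p :: "nat \<Rightarrow> 'a"
  assumes descent: "\<And>a. T \<le> a \<Longrightarrow> a \<le> k \<Longrightarrow> \<exists>c<a. c mod T = a mod T \<and> p c = p a"
  shows "a \<le> k \<Longrightarrow> p a = p (a mod T)"
proof (induction a rule: less_induct)
  case (less a)
  show ?case
  proof (cases "a < T")
    case False
    then have "T \<le> a"
      by simp
    with descent less.prems obtain c where "c < a" "c mod T = a mod T" "p c = p a"
      by blast
    with less show ?thesis
      by auto
  qed simp
qed

lemma boundary_cond_step_down:
  assumes bc: "boundary_cond n k p" and a: "t + 1 \<le> a" "a \<le> k"
    and window: "n \<le> t * k + (a - 1)" "t * k + (a - 1) < n + k"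
  shows "p (a - (t + 1)) = p a"
proof -
  define j where "j = t * k + (a - 1)"
  have "j mod k = a - 1"
    unfolding j_def mod_mult_self3 using a by simp
  moreover have "j = (a - (t + 1)) + t * (k + 1)"
    using a by (simp add: j_def algebra_simps)
  then have "j mod (k + 1) = (a - (t + 1)) mod (k + 1)"
    by (simp only: mod_mult_self1)
  ultimately show ?thesis
    using boundary_cond_at[OF bc, of j] window a by (simp add: j_def)
qed

lemma boundary_cond_step_across:
  assumes bc: "boundary_cond n k p" and c: "1 \<le> c" "c < a" "c + (k + 1) = a + (t + 1)"
    and a: "a \<le> k" and window: "n \<le> t * k + (c - 1)" "t * k + (c - 1) < n + k"
  shows "p c = p a"
proof -
  define j where "j = t * k + (c - 1)"
  have "j mod k = c - 1"
    unfolding j_def mod_mult_self3 using c a by simp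
  moreover have "(t - 1) * (k + 1) + (k + 1) = t * k + t"
    using c a by (cases t) (simp_all add: algebra_simps)
  with c have "j = a + (t - 1) * (k + 1)"
    unfolding j_def by linarith
  then have "j mod (k + 1) = a mod (k + 1)"
    by (simp only: mod_mult_self1)
  ultimately show ?thesis
    using boundary_cond_at[OF bc, of j] window c a by (simp add: j_def)
qed

lemma boundary_cond_plus_periodic:
  assumes bc: "boundary_cond (t * k + i) k p" and "i \<le> t"
  shows "a \<le> k \<Longrightarrow> p a = p (a mod (t + 1))"
proof (rule periodic_of_descent)
  fix a
  assume a: "t + 1 \<le> a" "a \<le> k"
  then have "p (a - (t + 1)) = p a"
    using \<open>i \<le> t\<close> by (intro boundary_cond_step_down[OF bc]) auto
  with a show "\<exists>c<a. c mod (t + 1) = a mod (t + 1) \<and> p c = p a"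
    by (intro exI[of _ "a - (t + 1)"]) (simp add: le_mod_geq)
qed

lemma boundary_cond_minus_periodic:
  assumes bc: "boundary_cond (t * k - i) k p" and dvd: "(t + 1) dvd (k + 1)" and "i \<le> t"
  shows "a \<le> k \<Longrightarrow> p a = p (a mod (t + 1))"
proof (rule periodic_of_descent)
  fix a
  assume a: "t + 1 \<le> a" "a \<le> k"
  have "t \<le> t * k"
    using a by (cases k) auto
  with \<open>i \<le> t\<close> have ik: "i \<le> t * k"
    by (rule le_trans)
  show "\<exists>c<a. c mod (t + 1) = a mod (t + 1) \<and> p c = p a"
  proof (cases "a + i \<le> k")
    case True
    then have "p (a - (t + 1)) = p a"
      by (intro boundary_cond_step_down[OF bc]) (use a ik in linarith)+
    with a show ?thesis
      by (intro exI[of _ "a - (t + 1)"]) (simp add: le_mod_geq)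
  next
    case False
    \<comment> \<open>position t k + a - 1 lies beyond the window, but position t k + c - 1 also links
      p a to a smaller argument c, and it lies in the window because k + 1 \<ge> 2 (t + 1)\<close>
    obtain m where m: "k + 1 = (t + 1) * m"
      using dvd by (auto elim: dvdE)
    have "m \<noteq> 0" "m \<noteq> 1"
      using a m by (intro notI; simp)+
    then have "(t + 1) * 2 \<le> (t + 1) * m"
      by (intro mult_le_mono2) linarith
    with m have m2: "2 * (t + 1) \<le> k + 1"
      by linarith
    define c where "c = a + (t + 1) - (k + 1)"
    have c: "1 \<le> c" "c < a" "c + (k + 1) = a + (t + 1)"
      using False a m2 \<open>i \<le> t\<close> unfolding c_def by linarith+
    have "c + (t + 1) * m = a + (t + 1)"
      using c(3) m by linarith
    then have c_mod: "c mod (t + 1) = a mod (t + 1)"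
      by (metis mod_add_self2 mod_mult_self2)
    have "p c = p a"
      by (rule boundary_cond_step_across[OF bc c a(2)]) (use a c m2 \<open>i \<le> t\<close> ik in arith)+
    with c c_mod show ?thesis
      by (intro exI[of _ c]) simp
  qed
qed

lemma Suc_mod_mod_eq_add_div:
  fixes j k T :: nat
  assumes "T dvd k + 1"
  shows "Suc (j mod k) mod T = (j + Suc (j div k)) mod T"
proof -
  obtain m where m: "k + 1 = T * m"
    using assms by (auto elim: dvdE)
  have "T * (m * (j div k)) = j div k * k + j div k"
    by (simp only: mult.assoc[symmetric] m[symmetric]) (simp add: algebra_simps)
  then have "j + Suc (j div k) = Suc (j mod k) + T * (m * (j div k))"
    using div_mult_mod_eq[of j k] by linarith
  then show ?thesis
    by simp
qed

lemma boundary_cond_periodic_iff: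
  assumes "T dvd k + 1"
  shows "boundary_cond n k (\<lambda>a. h (a mod T))
    \<longleftrightarrow> (\<forall>j\<in>{n..<n+k}. h ((j + Suc (j div k)) mod T) = h (j mod T))"
  using assms by (simp add: boundary_cond_def profile_def mod_mod_cancel Suc_mod_mod_eq_add_div)

lemma residue_step_in_block:
  assumes "t * k \<le> j" "j < t * k + k"
  shows "(j + Suc (j div k)) mod (t + 1) = j mod (t + 1)"
proof -
  have "j div k = t"
    using assms by (intro div_nat_eqI) (simp_all add: algebra_simps)
  then show ?thesis
    by (simp only: Suc_eq_plus1 mod_add_self2)
qed

lemma residue_step_after_block:
  assumes "x < t" "t \<le> k"
  shows "((t + 1) * k + x + Suc (((t + 1) * k + x) div k)) mod (t + 1) = Suc x"
    and "((t + 1) * k + x) mod (t + 1) = x"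
proof -
  have "((t + 1) * k + x) div k = t + 1"
    using assms by (intro div_nat_eqI) (simp_all add: algebra_simps)
  moreover have "(t + 1) * k + x + Suc (t + 1) = Suc x + (t + 1) * (k + 1)"
    by (simp add: algebra_simps)
  then have "((t + 1) * k + x + Suc (t + 1)) mod (t + 1) = Suc x mod (t + 1)"
    by (simp only: mod_mult_self2)
  ultimately show "((t + 1) * k + x + Suc (((t + 1) * k + x) div k)) mod (t + 1) = Suc x"
    using assms by simp
  show "((t + 1) * k + x) mod (t + 1) = x"
    by (simp only: mod_mult_self4) (use assms in simp)
qed

lemma mod_eq_of_int_eq:
  fixes a b M :: nat and q :: int
  assumes "int a = int b + int M * q"
  shows "a mod M = b mod M"
proof -
  have "int (a mod M) = int (b mod M)"
    using assms by (simp add: zmod_int)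
  then show ?thesis
    by simp
qed

lemma residue_step_before_block:
  assumes dvd: "(t + 1) dvd (k + 1)" and d: "0 < d" "d \<le> t"
  defines "j \<equiv> t * k + d - (t + 1)"
  shows "(j + Suc (j div k)) mod (t + 1) = d"
    and "j mod (t + 1) = Suc d mod (t + 1)"
proof -
  obtain m where m: "k + 1 = (t + 1) * m"
    using dvd by (auto elim: dvdE)
  have km: "int k = (int t + 1) * int m - 1"
    using arg_cong[OF m, of int] by (simp add: algebra_simps; linarith)
  have tk: "t \<le> k"
    using dvd_imp_le[OF dvd] by simp
  have t: "1 \<le> t" "t \<le> t * k"
    using d tk by (auto simp: Suc_le_eq)
  have "t + 1 \<le> t * k + d"
    using d t by linarith
  then have jint: "int j = int t * int k + int d - int t - 1"
    by (simp add: j_def of_nat_diff)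
  have eq1: "k * (t - 1) + k = t * k" and eq2: "k * Suc (t - 1) = t * k"
    using t by (cases t; simp add: algebra_simps)+
  have "k * (t - 1) \<le> j"
    unfolding j_def using eq1 d tk by arith
  moreover have "j < k * Suc (t - 1)"
    unfolding j_def eq2 using d \<open>t + 1 \<le> t * k + d\<close> by arith
  ultimately have "j div k = t - 1"
    by (rule div_nat_eqI)
  moreover have "(j + Suc (t - 1)) mod (t + 1) = d mod (t + 1)"
    by (rule mod_eq_of_int_eq[where q="int t * int m - 1"]) (use jint t in \<open>simp add: km algebra_simps\<close>)
  ultimately show "(j + Suc (j div k)) mod (t + 1) = d"
    using d by simp
  show "j mod (t + 1) = Suc d mod (t + 1)"
    by (rule mod_eq_of_int_eq[where q="int t * int m - 2"]) (use jint in \<open>simp add: km algebra_simps\<close>)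
qed

lemma boundary_cond_plus_periodic_iff:
  assumes dvd: "(t + 1) dvd (k + 1)" and it: "i \<le> t"
  shows "boundary_cond (t * k + i) k (\<lambda>a. h (a mod (t + 1))) \<longleftrightarrow> (\<forall>x<i. h (Suc x) = h x)"
proof -
  let ?C = "\<lambda>j. h ((j + Suc (j div k)) mod (t + 1)) = h (j mod (t + 1))"
  have tk: "t \<le> k"
    using dvd_imp_le[OF dvd] by simp
  have after: "?C ((t + 1) * k + x) \<longleftrightarrow> h (Suc x) = h x" if "x < i" for x
    using residue_step_after_block[of x t k] that it tk by simp
  show ?thesis
    unfolding boundary_cond_periodic_iff[OF dvd]
  proof (intro iffI allI impI ballI)
    fix x
    assume "\<forall>j\<in>{t * k + i..<t * k + i + k}. ?C j" and "x < i"
    moreover have "(t + 1) * k + x \<in> {t * k + i..<t * k + i + k}"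
      using \<open>x < i\<close> it tk by (simp add: algebra_simps)
    ultimately show "h (Suc x) = h x"
      using after by blast
  next
    fix j
    assume steps: "\<forall>x<i. h (Suc x) = h x" and j: "j \<in> {t * k + i..<t * k + i + k}"
    have "(t + 1) * k = t * k + k"
      by simp
    show "?C j"
    proof (cases "j < t * k + k")
      case False
      then have "j = (t + 1) * k + (j - (t + 1) * k)" "j - (t + 1) * k < i"
        using j \<open>(t + 1) * k = t * k + k\<close> by (simp_all only: atLeastLessThan_iff; arith)+
      with steps after show ?thesis
        by metis
    qed (use j residue_step_in_block in auto)
  qed
qed

lemma boundary_cond_minus_periodic_iff:
  assumes dvd: "(t + 1) dvd (k + 1)" and it: "i \<le> t"
  shows "boundary_cond (t * k - i) k (\<lambda>a. h (a mod (t + 1)))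
    \<longleftrightarrow> (\<forall>d. t - i < d \<and> d \<le> t \<longrightarrow> h d = h (Suc d mod (t + 1)))"
proof -
  let ?C = "\<lambda>j. h ((j + Suc (j div k)) mod (t + 1)) = h (j mod (t + 1))"
  have tk: "t \<le> k"
    using dvd_imp_le[OF dvd] by simp
  have ik: "i \<le> t * k"
    using it tk by (cases k) auto
  have before: "?C (t * k + d - (t + 1)) \<longleftrightarrow> h d = h (Suc d mod (t + 1))"
    if "t - i < d" "d \<le> t" for d
    using residue_step_before_block[OF dvd, of d] that by simp
  show ?thesis
    unfolding boundary_cond_periodic_iff[OF dvd]
  proof (intro iffI allI impI ballI)
    fix d
    assume "\<forall>j\<in>{t * k - i..<t * k - i + k}. ?C j" and d: "t - i < d \<and> d \<le> t"
    moreover have "t * k - i \<le> t * k + d - (t + 1)" "t * k + d - (t + 1) < t * k - i + k"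
      using d it ik tk by arith+
    then have "t * k + d - (t + 1) \<in> {t * k - i..<t * k - i + k}"
      by simp
    ultimately show "h d = h (Suc d mod (t + 1))"
      using before by blast
  next
    fix j
    assume steps: "\<forall>d. t - i < d \<and> d \<le> t \<longrightarrow> h d = h (Suc d mod (t + 1))"
      and j: "j \<in> {t * k - i..<t * k - i + k}"
    show "?C j"
    proof (cases "t * k \<le> j")
      case False
      define d where "d = j + (t + 1) - t * k"
      have "j = t * k + d - (t + 1)" "t - i < d" "d \<le> t"
        using j False ik it unfolding d_def atLeastLessThan_iff by arith+
      with steps before show ?thesis
        by metis
    qed (use j ik residue_step_in_block in auto)
  qed
qed

lemma Suc_eq_upto_iff_zero:
  assumes "h 0 = 0"
  shows "(\<forall>x<i. h (Suc x) = h x) \<longleftrightarrow> (\<forall>x\<le>i. h x = 0)"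
proof
  assume steps: "\<forall>x<i. h (Suc x) = h x"
  show "\<forall>x\<le>i. h x = 0"
  proof (intro allI impI)
    fix x
    show "x \<le> i \<Longrightarrow> h x = 0"
      using assms steps by (induction x) auto
  qed
qed auto

lemma Suc_mod_eq_top_iff_zero:
  assumes "h 0 = 0" and "i \<le> t"
  shows "(\<forall>d. t - i < d \<and> d \<le> t \<longrightarrow> h d = h (Suc d mod (t + 1)))
    \<longleftrightarrow> (\<forall>d. t - i < d \<and> d \<le> t \<longrightarrow> h d = 0)"
proof
  assume steps: "\<forall>d. t - i < d \<and> d \<le> t \<longrightarrow> h d = h (Suc d mod (t + 1))"
  have top: "l < i \<longrightarrow> h (t - l) = 0" for l
  proof (induction l)
    case 0
    show ?case
      using steps assms by auto
  next
    case (Suc l)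
    show ?case
    proof
      assume "Suc l < i"
      then have "h (t - Suc l) = h (Suc (t - Suc l) mod (t + 1))"
        using steps \<open>i \<le> t\<close> by auto
      also have "Suc (t - Suc l) = t - l"
        using \<open>Suc l < i\<close> \<open>i \<le> t\<close> by simp
      finally show "h (t - Suc l) = 0"
        using Suc \<open>Suc l < i\<close> by simp
    qed
  qed
  show "\<forall>d. t - i < d \<and> d \<le> t \<longrightarrow> h d = 0"
  proof (intro allI impI)
    fix d
    assume "t - i < d \<and> d \<le> t"
    then have "t - d < i" "t - (t - d) = d"
      by auto
    with top[of "t - d"] show "h d = 0"
      by simp
  qed
next
  assume "\<forall>d. t - i < d \<and> d \<le> t \<longrightarrow> h d = 0"
  then show "\<forall>d. t - i < d \<and> d \<le> t \<longrightarrow> h d = h (Suc d mod (t + 1))"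
    using assms by (auto simp: mod_Suc)
qed

lemma boundary_cond_plus_iff:
  assumes t: "0 < t" and dvd: "(t + 1) dvd (k + 1)" and it: "i \<le> t" and p0: "p 0 = 0"
  shows "boundary_cond (t * k + i) k p \<longleftrightarrow>
    (\<forall>a\<le>k. p a = p (a mod (t + 1))) \<and> (\<forall>d<t + 1. d \<notin> {i + 1..t} \<longrightarrow> p d = 0)"
    (is "_ \<longleftrightarrow> ?periodic \<and> ?vanish")
proof -
  have k: "0 < k"
    using t dvd_imp_le[OF dvd] by simp
  have reduce: "boundary_cond (t * k + i) k p \<longleftrightarrow> boundary_cond (t * k + i) k (\<lambda>a. p (a mod (t + 1)))"
    if ?periodic
    using that by (intro boundary_cond_cong[OF k]) auto
  have vanish: "?vanish \<longleftrightarrow> (\<forall>x\<le>i. p x = 0)"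
    using it by force
  show ?thesis
  proof
    assume bc: "boundary_cond (t * k + i) k p"
    have per: ?periodic
      using boundary_cond_plus_periodic[OF bc it] by blast
    with bc reduce have "boundary_cond (t * k + i) k (\<lambda>a. p (a mod (t + 1)))"
      by blast
    then have "\<forall>x\<le>i. p x = 0"
      using boundary_cond_plus_periodic_iff[OF dvd it] Suc_eq_upto_iff_zero[where h=p, OF p0] by blast
    with per vanish show "?periodic \<and> ?vanish"
      by blast
  next
    assume "?periodic \<and> ?vanish"
    with vanish have per: ?periodic and "\<forall>x\<le>i. p x = 0"
      by blast+
    then have "boundary_cond (t * k + i) k (\<lambda>a. p (a mod (t + 1)))"
      using boundary_cond_plus_periodic_iff[OF dvd it] Suc_eq_upto_iff_zero[where h=p, OF p0] by blast
    with per reduce show "boundary_cond (t * k + i) k p"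
      by blast
  qed
qed

lemma boundary_cond_minus_iff:
  assumes t: "0 < t" and dvd: "(t + 1) dvd (k + 1)" and it: "i \<le> t" and p0: "p 0 = 0"
  shows "boundary_cond (t * k - i) k p \<longleftrightarrow>
    (\<forall>a\<le>k. p a = p (a mod (t + 1))) \<and> (\<forall>d<t + 1. d \<notin> {1..t - i} \<longrightarrow> p d = 0)"
    (is "_ \<longleftrightarrow> ?periodic \<and> ?vanish")
proof -
  have k: "0 < k"
    using t dvd_imp_le[OF dvd] by simp
  have reduce: "boundary_cond (t * k - i) k p \<longleftrightarrow> boundary_cond (t * k - i) k (\<lambda>a. p (a mod (t + 1)))"
    if ?periodic
    using that by (intro boundary_cond_cong[OF k]) auto
  have vanish: "?vanish \<longleftrightarrow> (\<forall>d. t - i < d \<and> d \<le> t \<longrightarrow> p d = 0)"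
  proof (intro iffI allI impI)
    fix d
    assume ?vanish and "t - i < d \<and> d \<le> t"
    then show "p d = 0"
      by auto
  next
    fix d
    assume "\<forall>d. t - i < d \<and> d \<le> t \<longrightarrow> p d = 0" and "d < t + 1" and "d \<notin> {1..t - i}"
    then show "p d = 0"
      using p0 by (cases "d = 0") auto
  qed
  show ?thesis
  proof
    assume bc: "boundary_cond (t * k - i) k p"
    have per: ?periodic
      using boundary_cond_minus_periodic[OF bc dvd it] by blast
    with bc reduce have "boundary_cond (t * k - i) k (\<lambda>a. p (a mod (t + 1)))"
      by blast
    then have "\<forall>d. t - i < d \<and> d \<le> t \<longrightarrow> p d = 0"
      using boundary_cond_minus_periodic_iff[OF dvd it] Suc_mod_eq_top_iff_zero[where h=p, OF p0 it] by blast
    with per vanish show "?periodic \<and> ?vanish"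
      by blast
  next
    assume "?periodic \<and> ?vanish"
    with vanish have per: ?periodic and "\<forall>d. t - i < d \<and> d \<le> t \<longrightarrow> p d = 0"
      by blast+
    then have "boundary_cond (t * k - i) k (\<lambda>a. p (a mod (t + 1)))"
      using boundary_cond_minus_periodic_iff[OF dvd it] Suc_mod_eq_top_iff_zero[where h=p, OF p0 it] by blast
    with per reduce show "boundary_cond (t * k - i) k p"
      by blast
  qed
qed

corollary nullity_A_plus:
  assumes kn: "k < t * k + i" and dvd: "(t + 1) dvd (k + 1)" and it: "i \<le> t"
  shows "nullity_A (t * k + i) k = t - i"
proof -
  have t: "0 < t" and tk: "t \<le> k"
    using kn it dvd_imp_le[OF dvd] by (auto intro: Nat.gr0I)
  have "nullity_A (t * k + i) k = t + 1 - (i + 1)"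
    unfolding nullity_A_def
    by (rule kernel_dim_A_mat_eq_periodic_profiles[where T="t + 1"])
      (use t tk kn boundary_cond_plus_iff[OF t dvd it] in auto)
  then show ?thesis
    by simp
qed

corollary nullity_A_minus:
  assumes kn: "k < t * k - i" and dvd: "(t + 1) dvd (k + 1)" and it: "i \<le> t"
  shows "nullity_A (t * k - i) k = t - i"
proof -
  have t: "0 < t" and tk: "t \<le> k"
    using kn dvd_imp_le[OF dvd] by (auto intro: Nat.gr0I)
  have "nullity_A (t * k - i) k = (t - i) + 1 - 1"
    unfolding nullity_A_def
    by (rule kernel_dim_A_mat_eq_periodic_profiles[where T="t + 1"])
      (use t tk kn boundary_cond_minus_iff[OF t dvd it] in auto)
  then show ?thesis
    by simp
qed

lemma nullity_A_8_2: "nullity_A 8 2 = 0"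
proof -
  have "nullity_A 8 2 = 0 + 1 - 1"
    unfolding nullity_A_def
  proof (rule kernel_dim_A_mat_eq_periodic_profiles[where T=3])
    fix p :: "nat \<Rightarrow> real"
    assume p0: "p 0 = 0"
    have "{8..<8 + 2} = {8, 9 :: nat}"
      by auto
    moreover have "profile 2 p 8 = p 1 - p 2"
      by (simp add: profile_def)
    moreover have "(9 :: nat) mod 2 + 1 = 2"
      by simp
    then have "profile 2 p 9 = p 2 - p 0"
      by (simp only: profile_def) simp
    ultimately have "boundary_cond 8 2 p \<longleftrightarrow> p 1 = 0 \<and> p 2 = 0"
      using p0 by (auto simp: boundary_cond_def)
    moreover have "a \<le> 2 \<longleftrightarrow> a = 0 \<or> a = 1 \<or> a = 2" "a < 3 \<longleftrightarrow> a = 0 \<or> a = 1 \<or> a = 2" for a :: nat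
      by arith+
    ultimately show "boundary_cond 8 2 p \<longleftrightarrow>
        (\<forall>a\<le>2. p a = p (a mod 3)) \<and> (\<forall>d<3. d \<notin> {1..0} \<longrightarrow> p d = 0)"
      using p0 by (simp; blast)
  qed simp_all
  then show ?thesis
    by simp
qed

lemma N_of_nat: "k < n \<Longrightarrow> N (int n) k = nullity_A n k"
  by (simp add: N_def)

lemma mult_diff_le_imp_eq_2:
  fixes t k j :: nat
  assumes "2 \<le> t" "t \<le> k" "j \<le> t" "t * k - j \<le> k"
  shows "t = 2 \<and> k = 2 \<and> j = 2"
proof -
  have "2 * k \<le> t * k"
    using assms(1) by (rule mult_le_mono1)
  with assms have "k = t"
    by linarith
  with assms(4) have "t * t - j \<le> t"
    by simp
  with assms(3) have "t * t \<le> 2 * t"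
    by arith
  then have "t \<le> 2"
    using assms(1) by simp
  with assms \<open>k = t\<close> show ?thesis
    by auto
qed

theorem theorem8p7:
  fixes t k :: nat and i :: int
  assumes "t \<ge> 2" and "k \<ge> 2" and "(t + 1) dvd (k + 1)"
    and "0 \<le> i" and "i \<le> int t"
  shows "N (int t * int k + i) k = nat (int t - i) \<and> N (int t * int k - i) k = nat (int t - i)"
proof -
  obtain j where i: "i = int j" and j: "j \<le> t"
    using assms(4,5) by (metis nonneg_int_cases of_nat_le_iff)
  have tk: "t \<le> k"
    using dvd_imp_le[OF assms(3)] by simp
  have "2 * k \<le> t * k"
    using assms(1) by (rule mult_le_mono1)
  then have kn: "k < t * k + j" and jtk: "j \<le> t * k"
    using assms(2) j tk by linarith+
  have plus: "N (int t * int k + i) k = t - j"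
    using N_of_nat[OF kn] nullity_A_plus[OF kn assms(3) j] i by simp
  have minus: "N (int t * int k - i) k = t - j"
  proof (cases "k < t * k - j")
    case True
    then show ?thesis
      using N_of_nat[of k "t * k - j"] nullity_A_minus[OF True assms(3) j] i jtk by (simp add: of_nat_diff)
  next
    case False
    with assms(1) tk j have "t = 2" "k = 2" "j = 2"
      using mult_diff_le_imp_eq_2 by auto
    then show ?thesis
      using i nullity_A_8_2 by (simp add: N_def)
  qed
  show ?thesis
    using plus minus i j by simp
qed

end
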